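(* Let $n\ge2$ and let $\mathcal G_n$, $\mathcal N_{0,n}$, $z_g$, $U_m(z_g)$ be as in the context. Let $D=\Theta((\gamma,g,\mu),C(\mu\eta))$ be a compact open bisection in $\mathcal G_n$ ($\gamma,\mu,\eta\in X^*$, $g\in\mathfrak G_n$). If $[(\varnothing,e,\varnothing),\mathbf 1^\infty]\in\overline D$, then there exist $m_D\in\mathbb N$ and $g_D\in\mathcal N_{0,n}$ such that $$D\cap\Bigl(\bigcup_{h\in\mathcal N_{0,n}}U_{m_D}(z_h)\Bigr)=U_{m_D}(z_{g_D}).$$
   Context: Let $X=\{\mathbf 0,\mathbf 1\}$, $X^*$ the finite words (with empty word $\varnothing$), $X^\omega$ the infinite words, $C(\eta)=\{\eta w:w\in X^\omega\}$, $\mathbf 1^m$ and $\mathbf 1^\infty$ the finite/infinite words of ones. Fix $n\ge2$, a primitive polynomial $f_n$ of degree $n$ over $\mathbb F_2$ with root $\alpha$, and $\operatorname{Tr}(\beta)=\beta+\beta^2+\dots+\beta^{2^{n-1}}\in\mathbb F_2$. $\mathfrak G_n$ is the group of automorphisms of the binary rooted tree $X^*$ generated by $a$ ($a\cdot(\mathbf 0w)=\mathbf 1w$, $a\cdot(\mathbf 1w)=\mathbf 0w$) and $\iota_n(\beta)$, $\beta\in\mathbb F_{2^n}$, where $\iota_n(\beta)\cdot(\mathbf 0w)=\mathbf 0(a^{\operatorname{Tr}(\beta)}\cdot w)$, $\iota_n(\beta)\cdot(\mathbf 1w)=\mathbf 1(\iota_n(\alpha\beta)\cdot w)$; restrictions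 $g|_x$ are given by $g\cdot(xw)=(g\cdot x)(g|_x\cdot w)$. $\mathcal N_{0,n}=\iota_n(\mathbb F_{2^n})$ and $e=\iota_n(0)$ is the identity. $\mathcal G_n$ is the groupoid of germs of the action of the inverse semigroup $\{(\eta,g,\mu)\}\cup\{0\}$ on $X^\omega$ with $(\eta,g,\mu):C(\mu)\to C(\eta)$, $\mu w\mapsto\eta(g\cdot w)$; germs $[(\eta,g,\mu),w]$, $w\in C(\mu)$, with $[(\eta,g,\mu),w]=[(\eta',g',\mu'),w']$ iff $w=w'$ and some finite prefix $\nu=\mu\epsilon=\mu'\epsilon'$ of $w$ satisfies $\eta(g\cdot\epsilon)=\eta'(g'\cdot\epsilon')$ and $g|_\epsilon=g'|_{\epsilon'}$. $\Theta(s,U)=\{[s,w]:w\in U\}$ for $s=(\eta,g,\mu)$, $U\subseteq C(\mu)$ open; these form a basis of the topology. $z_g=[(\varnothing,g,\varnothing),\mathbf 1^\infty]$ and $U_m(z_g)=\Theta((\varnothing,g,\varnothing),C(\mathbf 1^m))$. *)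

theory Defs
  imports "HOL-Analysis.Analysis" "HOL-Library.Z2" "HOL-Computational_Algebra.Polynomial"
begin

text \<open>Letters: False = 0, True = 1. Finite words: bool list. Infinite words: nat => bool.\<close>

text \<open>A primitive polynomial of degree n over F_2: irreducible of degree n whose order
  (least k > 0 with f dividing x^k - 1) equals 2^n - 1.\<close>
definition primitive_poly :: "nat \<Rightarrow> bit poly \<Rightarrow> bool" where
  "primitive_poly n f \<longleftrightarrow> degree f = n \<and> irreducible f \<and>
     (\<forall>k>0. f dvd (monom 1 k - 1) \<longleftrightarrow> (2^n - 1) dvd k)"

text \<open>Absolute trace F_{2^n} -> F_2, as a boolean (True iff Tr(b) = 1).\<close>
definition tr :: "nat \<Rightarrow> 'k::field \<Rightarrow> bool" where
  "tr n b \<longleftrightarrow> (\<Sum>i<n. b ^ (2 ^ i)) = 1"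

fun act_a :: "bool list \<Rightarrow> bool list" where
  "act_a [] = []"
| "act_a (x # w) = (\<not> x) # w"

fun iota :: "nat \<Rightarrow> 'k::field \<Rightarrow> 'k \<Rightarrow> bool list \<Rightarrow> bool list" where
  "iota n \<alpha> b [] = []"
| "iota n \<alpha> b (False # w) = False # (if tr n b then act_a w else w)"
| "iota n \<alpha> b (True # w) = True # iota n \<alpha> (\<alpha> * b) w"

inductive_set grpG :: "nat \<Rightarrow> 'k::field \<Rightarrow> (bool list \<Rightarrow> bool list) set"
  for n :: nat and \<alpha> :: "'k::field" where
  gen_id: "id \<in> grpG n \<alpha>"
| gen_a: "act_a \<in> grpG n \<alpha>"
| gen_iota: "iota n \<alpha> b \<in> grpG n \<alpha>"
| gen_comp: "g \<in> grpG n \<alpha> \<Longrightarrow> h \<in> grpG n \<alpha> \<Longrightarrow> g \<circ> h \<in> grpG n \<alpha>"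
| gen_inv: "g \<in> grpG n \<alpha> \<Longrightarrow> inv g \<in> grpG n \<alpha>"

definition N0 :: "nat \<Rightarrow> 'k::field \<Rightarrow> (bool list \<Rightarrow> bool list) set" where
  "N0 n \<alpha> = range (iota n \<alpha>)"

text \<open>Restriction g|_x, defined by g(xw) = (g x)(g|_x w).\<close>
definition restr :: "(bool list \<Rightarrow> bool list) \<Rightarrow> bool list \<Rightarrow> (bool list \<Rightarrow> bool list)" where
  "restr g x = (\<lambda>w. drop (length x) (g (x @ w)))"

definition pref :: "nat \<Rightarrow> (nat \<Rightarrow> bool) \<Rightarrow> bool list" where
  "pref k w = map w [0..<k]"

definition act_inf :: "(bool list \<Rightarrow> bool list) \<Rightarrow> (nat \<Rightarrow> bool) \<Rightarrow> (nat \<Rightarrow> bool)" where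
  "act_inf g w = (\<lambda>i. g (pref (Suc i) w) ! i)"

definition cyl :: "bool list \<Rightarrow> (nat \<Rightarrow> bool) set" where
  "cyl \<mu> = {w. \<forall>i<length \<mu>. w i = \<mu> ! i}"

definition conc :: "bool list \<Rightarrow> (nat \<Rightarrow> bool) \<Rightarrow> (nat \<Rightarrow> bool)" where
  "conc \<eta> v = (\<lambda>i. if i < length \<eta> then \<eta> ! i else v (i - length \<eta>))"

definition dropw :: "nat \<Rightarrow> (nat \<Rightarrow> bool) \<Rightarrow> (nat \<Rightarrow> bool)" where
  "dropw k w = (\<lambda>i. w (i + k))"

definition ones :: "nat \<Rightarrow> bool" where "ones = (\<lambda>_. True)"

definition cantor_open :: "(nat \<Rightarrow> bool) set \<Rightarrow> bool" where
  "cantor_open U \<longleftrightarrow> (\<forall>w\<in>U. \<exists>k. cyl (pref k w) \<subseteq> U)"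

type_synonym triple = "bool list \<times> (bool list \<Rightarrow> bool list) \<times> bool list"
type_synonym rep = "triple \<times> (nat \<Rightarrow> bool)"

definition valid_triple :: "nat \<Rightarrow> 'k::field \<Rightarrow> triple \<Rightarrow> bool" where
  "valid_triple n \<alpha> s = (case s of (\<eta>, g, \<mu>) \<Rightarrow> g \<in> grpG n \<alpha>)"

definition valid_rep :: "nat \<Rightarrow> 'k::field \<Rightarrow> rep \<Rightarrow> bool" where
  "valid_rep n \<alpha> r = (case r of ((\<eta>, g, \<mu>), w) \<Rightarrow> g \<in> grpG n \<alpha> \<and> w \<in> cyl \<mu>)"

definition germ_rel :: "rep \<Rightarrow> rep \<Rightarrow> bool" where
  "germ_rel r r' = (case r of ((\<eta>, g, \<mu>), w) \<Rightarrow> case r' of ((\<eta>', g', \<mu>'), w') \<Rightarrow>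
     w = w' \<and> (\<exists>\<epsilon> \<epsilon>'. \<mu> @ \<epsilon> = \<mu>' @ \<epsilon>' \<and> w \<in> cyl (\<mu> @ \<epsilon>) \<and>
        \<eta> @ g \<epsilon> = \<eta>' @ g' \<epsilon>' \<and> restr g \<epsilon> = restr g' \<epsilon>'))"

text \<open>The germ [s, w] as an equivalence class of valid representatives.\<close>
definition germ :: "nat \<Rightarrow> 'k::field \<Rightarrow> rep \<Rightarrow> rep set" where
  "germ n \<alpha> r = {r'. valid_rep n \<alpha> r' \<and> germ_rel r r'}"

definition Theta :: "nat \<Rightarrow> 'k::field \<Rightarrow> triple \<Rightarrow> (nat \<Rightarrow> bool) set \<Rightarrow> rep set set" where
  "Theta n \<alpha> s U = (\<lambda>w. germ n \<alpha> (s, w)) ` U"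

definition germ_basis :: "nat \<Rightarrow> 'k::field \<Rightarrow> rep set set set" where
  "germ_basis n \<alpha> = {Theta n \<alpha> (\<eta>, g, \<mu>) U | \<eta> g \<mu> U.
      g \<in> grpG n \<alpha> \<and> cantor_open U \<and> U \<subseteq> cyl \<mu>}"

definition germ_top :: "nat \<Rightarrow> 'k::field \<Rightarrow> rep set topology" where
  "germ_top n \<alpha> = topology_generated_by (germ_basis n \<alpha>)"

definition germs :: "nat \<Rightarrow> 'k::field \<Rightarrow> rep set set" where
  "germs n \<alpha> = {germ n \<alpha> r | r. valid_rep n \<alpha> r}"

text \<open>Source and range of representatives (constant on germs).\<close>
definition src_rep :: "rep \<Rightarrow> (nat \<Rightarrow> bool)" where
  "src_rep r = snd r"

definition rng_rep :: "rep \<Rightarrow> (nat \<Rightarrow> bool)" where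
  "rng_rep r = (case r of ((\<eta>, g, \<mu>), w) \<Rightarrow> conc \<eta> (act_inf g (dropw (length \<mu>) w)))"

definition bisection :: "nat \<Rightarrow> 'k::field \<Rightarrow> rep set set \<Rightarrow> bool" where
  "bisection n \<alpha> D \<longleftrightarrow> D \<subseteq> germs n \<alpha> \<and> openin (germ_top n \<alpha>) D \<and>
     (\<forall>x\<in>D. \<forall>y\<in>D. (\<exists>r\<in>x. \<exists>r'\<in>y. src_rep r = src_rep r') \<longrightarrow> x = y) \<and>
     (\<forall>x\<in>D. \<forall>y\<in>D. (\<exists>r\<in>x. \<exists>r'\<in>y. rng_rep r = rng_rep r') \<longrightarrow> x = y)"

definition compact_open_bisection :: "nat \<Rightarrow> 'k::field \<Rightarrow> rep set set \<Rightarrow> bool" where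
  "compact_open_bisection n \<alpha> D \<longleftrightarrow> compactin (germ_top n \<alpha>) D \<and> bisection n \<alpha> D"

definition z :: "nat \<Rightarrow> 'k::field \<Rightarrow> (bool list \<Rightarrow> bool list) \<Rightarrow> rep set" where
  "z n \<alpha> g = germ n \<alpha> (([], g, []), ones)"

definition Um :: "nat \<Rightarrow> 'k::field \<Rightarrow> nat \<Rightarrow> (bool list \<Rightarrow> bool list) \<Rightarrow> rep set set" where
  "Um n \<alpha> m g = Theta n \<alpha> ([], g, []) (cyl (replicate m True))"

end

(*
  The closure hypothesis yields a point w, beginning with a long block 1^m, at which a germ of D
  equals the identity germ: on some prefix 1^m delta of w the map mu v |-> gamma g(v) is the
  identity, with trivial restriction.  The group is contracting: beyond some depth K every
  restriction of g has the form a^s iota(b) a^t, so restrictions one level deeper lie in {a}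
  union N_0.  Hence the restriction P of g at 1^j (j = m - |mu|) is a or some iota(b); it is not
  a, because P fixes delta with trivial restriction there.  Therefore on C(1^m) the germs of D
  are those of iota(c) with alpha^m c = b, and these form U_m(z_iota(c)).  That the maps
  a^s iota(b) a^t are closed under the needed compositions rests on iota(b) iota(c) = iota(b + c),
  i.e. on additivity of the F_2-valued trace.
*)
theory Submission
  imports Defs
begin

subsection \<open>Tree endomorphisms\<close>

definition tree_endo :: "(bool list \<Rightarrow> bool list) \<Rightarrow> bool" where
  "tree_endo g \<longleftrightarrow> (\<forall>x. length (g x) = length x) \<and> (\<forall>x y. take (length x) (g (x @ y)) = g x)"

lemma tree_endo_length: "tree_endo g \<Longrightarrow> length (g x) = length x"
  by (simp add: tree_endo_def)

lemma tree_endo_append: "tree_endo g \<Longrightarrow> g (x @ y) = g x @ restr g x y"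
  unfolding restr_def tree_endo_def by (metis append_take_drop_id)

lemma restr_Nil [simp]: "restr g [] = g"
  by (simp add: restr_def)

lemma restr_id [simp]: "restr id x = id"
  by (simp add: restr_def fun_eq_iff)

lemma restr_append: "restr g (x @ y) = restr (restr g x) y"
  by (simp add: restr_def fun_eq_iff add.commute)

lemma restr_comp:
  assumes g: "tree_endo g" and h: "tree_endo h"
  shows "restr (g \<circ> h) x = restr g (h x) \<circ> restr h x"
proof
  fix y
  have "g (h (x @ y)) = g (h x) @ restr g (h x) (restr h x y)"
    by (simp add: tree_endo_append[OF g] tree_endo_append[OF h])
  then show "restr (g \<circ> h) x y = (restr g (h x) \<circ> restr h x) y"
    by (simp add: restr_def tree_endo_length[OF g] tree_endo_length[OF h])
qed

lemma tree_endo_id: "tree_endo id"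
  by (simp add: tree_endo_def)

lemma tree_endo_comp:
  assumes g: "tree_endo g" and h: "tree_endo h"
  shows "tree_endo (g \<circ> h)"
  unfolding tree_endo_def
  by (simp add: tree_endo_length[OF g] tree_endo_length[OF h]
      tree_endo_append[OF g] tree_endo_append[OF h])

lemma tree_endo_inv:
  assumes b: "bij g" and g: "tree_endo g"
  shows "tree_endo (inv g)"
proof -
  have len: "length (inv g x) = length x" for x
    by (metis b bij_inv_eq_iff g tree_endo_length)
  have "take (length x) (inv g (x @ y)) = inv g x" for x y
  proof -
    define u where "u = inv g (x @ y)"
    have "g u = x @ y"
      unfolding u_def by (meson b bij_inv_eq_iff)
    moreover have "g u = g (take (length x) u) @ restr g (take (length x) u) (drop (length x) u)"
      using tree_endo_append[OF g] by (metis append_take_drop_id)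
    moreover have "length (take (length x) u) = length x"
      using len[of "x @ y"] by (simp add: u_def)
    ultimately have "g (take (length x) u) = x"
      by (simp add: tree_endo_length[OF g])
    then show ?thesis
      unfolding u_def by (metis b bij_inv_eq_iff)
  qed
  with len show ?thesis
    by (simp add: tree_endo_def)
qed

lemma length_act_a [simp]: "length (act_a x) = length x"
  by (cases x) auto

lemma act_a_act_a [simp]: "act_a (act_a x) = x"
  by (cases x) auto

lemma tree_endo_act_a: "tree_endo act_a"
proof -
  have "take (length x) (act_a (x @ y)) = act_a x" for x y
    by (cases x) auto
  then show ?thesis
    by (simp add: tree_endo_def)
qed

lemma restr_act_a: "x \<noteq> [] \<Longrightarrow> restr act_a x = id"
  by (cases x) (auto simp: restr_def fun_eq_iff)

lemma act_a_ne_id: "act_a \<noteq> id"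
  by (metis act_a.simps(2) id_apply list.inject)

subsection \<open>The generators \<open>\<iota>(\<beta>)\<close>\<close>

context
  fixes n :: nat and \<alpha> :: "'k::field"
begin

lemma length_iota [simp]: "length (iota n \<alpha> b x) = length x"
  by (induction n \<alpha> b x rule: iota.induct) auto

lemma iota_iota [simp]: "iota n \<alpha> b (iota n \<alpha> b x) = x"
  by (induction n \<alpha> b x rule: iota.induct) auto

lemma take_iota_append: "take (length x) (iota n \<alpha> b (x @ y)) = iota n \<alpha> b x"
proof (induction n \<alpha> b x rule: iota.induct)
  case (2 n \<alpha> b w)
  then show ?case by (cases w; cases y) auto
qed auto

lemma tree_endo_iota: "tree_endo (iota n \<alpha> b)"
  by (simp add: tree_endo_def take_iota_append)

lemma iota_zero: "iota n \<alpha> 0 = id"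
proof
  have "\<not> tr n (0::'k)"
    by (simp add: tr_def zero_power)
  fix x
  show "iota n \<alpha> 0 x = id x"
  proof (induction x)
    case (Cons c x)
    with \<open>\<not> tr n 0\<close> show ?case
      by (cases c) simp_all
  qed simp
qed

lemma restr_iota_True: "restr (iota n \<alpha> b) [True] = iota n \<alpha> (\<alpha> * b)"
  by (simp add: restr_def fun_eq_iff)

lemma restr_iota_False: "restr (iota n \<alpha> b) [False] = (if tr n b then act_a else id)"
  by (simp add: restr_def fun_eq_iff)

lemma iota_replicate_True_append:
  "iota n \<alpha> b (replicate m True @ w) = replicate m True @ iota n \<alpha> (\<alpha> ^ m * b) w"
  by (induction m arbitrary: b) (auto simp: mult.assoc mult.left_commute)

lemma iota_replicate_True: "iota n \<alpha> b (replicate m True) = replicate m True"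
  using iota_replicate_True_append[where w = "[]"] by simp

lemma restr_iota_replicate_True: "restr (iota n \<alpha> b) (replicate m True) = iota n \<alpha> (\<alpha> ^ m * b)"
  by (simp add: restr_def fun_eq_iff iota_replicate_True_append)

lemma grpG_bij_tree_endo: "g \<in> grpG n \<alpha> \<Longrightarrow> bij g \<and> tree_endo g"
proof (induction rule: grpG.induct)
  case gen_id
  show ?case using bij_id tree_endo_id by blast
next
  case gen_a
  show ?case by (simp add: involuntory_imp_bij tree_endo_act_a)
next
  case (gen_iota b)
  show ?case by (simp add: involuntory_imp_bij tree_endo_iota)
next
  case (gen_comp g h)
  then show ?case by (blast intro: bij_comp tree_endo_comp)
next
  case (gen_inv g)
  then show ?case by (simp add: bij_imp_bij_inv tree_endo_inv)
qed

end


subsection \<open>Fields of order \<open>2^n\<close> and the trace\<close>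

text \<open>The library's \<open>finite_field_power_card_eq_same\<close> requires the sort \<open>finite_field\<close>,
  which \<open>{field,finite}\<close> does not provide syntactically.\<close>
lemma power_card_eq_self:
  fixes x :: "'a::{field,finite}"
  shows "x ^ CARD('a) = x"
proof (cases "x = 0")
  case True
  then show ?thesis
    using finite_UNIV_card_ge_0[where ?'a = 'a] by (simp add: zero_power)
next
  case False
  define U where "U = UNIV - {0::'a}"
  have "bij_betw ((*) x) U U"
    unfolding U_def using False
    by (intro bij_betwI[where g = "\<lambda>y. y / x"]) auto
  then have "(\<Prod>y\<in>U. x * y) = (\<Prod>y\<in>U. y)"
    by (rule prod.reindex_bij_betw)
  moreover have "(\<Prod>y\<in>U. x * y) = x ^ card U * (\<Prod>y\<in>U. y)"
    by (simp add: prod.distrib)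
  moreover have "(\<Prod>y\<in>U. y) \<noteq> 0"
    by (simp add: U_def)
  ultimately have "x ^ card U = 1"
    by simp
  moreover have "card U = CARD('a) - 1" and "CARD('a) > 0"
    by (simp_all add: U_def card_Diff_singleton)
  ultimately show ?thesis
    by (metis Suc_diff_1 mult.right_neutral power_Suc)
qed

lemma two_eq_zero_if_card:
  assumes card: "CARD('a::{field,finite}) = 2 ^ n"
  shows "(2::'a) = 0"
proof -
  have "2 \<le> CARD('a)"
    using card_mono[of UNIV "{0::'a, 1}"] by simp
  then have "even (CARD('a))"
    using card by (cases n) auto
  then have "(-1::'a) ^ CARD('a) = 1"
    by simp
  then have "(1::'a) = -1"
    using power_card_eq_self[of "-1::'a"] by simp
  then show ?thesis
    by (metis add.right_inverse one_add_one)
qed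

context
  assumes char_two: "(2::'a::comm_ring_1) = 0"
begin

lemma power2_add_char_two: "((x::'a) + y) ^ 2 = x ^ 2 + y ^ 2"
proof -
  have "(x + y) ^ 2 = x ^ 2 + y ^ 2 + 2 * x * y"
    by (simp add: power2_eq_square algebra_simps)
  then show ?thesis
    by (simp add: char_two)
qed

lemma power_two_power_add_char_two: "((x::'a) + y) ^ 2 ^ i = x ^ 2 ^ i + y ^ 2 ^ i"
proof (induction i)
  case (Suc i)
  have "(x + y) ^ 2 ^ Suc i = ((x + y) ^ 2 ^ i) ^ 2"
    by (simp add: power_mult[symmetric] mult.commute)
  also have "\<dots> = x ^ 2 ^ Suc i + y ^ 2 ^ Suc i"
    by (simp add: Suc power2_add_char_two power_mult[symmetric] mult.commute)
  finally show ?case .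
qed simp

lemma power2_sum_char_two: "(\<Sum>i\<in>A. (f i :: 'a)) ^ 2 = (\<Sum>i\<in>A. f i ^ 2)"
  by (induction A rule: infinite_finite_induct) (simp_all add: power2_add_char_two)

end

definition field_trace :: "nat \<Rightarrow> 'a::field \<Rightarrow> 'a" where
  "field_trace n b = (\<Sum>i<n. b ^ 2 ^ i)"

lemma tr_iff_field_trace: "tr n b \<longleftrightarrow> field_trace n b = 1"
  by (simp add: tr_def field_trace_def)

context
  fixes n :: nat
  assumes card: "CARD('k::{field,finite}) = 2 ^ n"
begin

lemma field_trace_add: "field_trace n ((b::'k) + c) = field_trace n b + field_trace n c"
  using power_two_power_add_char_two[OF two_eq_zero_if_card[OF card]]
  by (simp add: field_trace_def sum.distrib)

lemma field_trace_zero_or_one: "field_trace n (b::'k) = 0 \<or> field_trace n b = 1"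
proof -
  have "field_trace n b ^ 2 = (\<Sum>i<n. b ^ 2 ^ Suc i)"
    unfolding field_trace_def power2_sum_char_two[OF two_eq_zero_if_card[OF card]]
    by (simp add: power_mult[symmetric] mult.commute)
  also have "\<dots> = field_trace n b + b ^ 2 ^ n - b"
    using sum.lessThan_Suc_shift[of "\<lambda>i. b ^ 2 ^ i" n] by (simp add: field_trace_def)
  also have "b ^ 2 ^ n = b"
    using power_card_eq_self[of b] card by simp
  finally have "field_trace n b * (field_trace n b - 1) = 0"
    by (simp add: power2_eq_square algebra_simps)
  then show ?thesis
    by auto
qed

lemma tr_add: "tr n ((b::'k) + c) \<longleftrightarrow> tr n b \<noteq> tr n c"
  using field_trace_zero_or_one[of b] field_trace_zero_or_one[of c]
    two_eq_zero_if_card[OF card]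
  by (auto simp: tr_iff_field_trace field_trace_add)

lemma iota_comp_iota: "iota n (\<alpha>::'k) b \<circ> iota n \<alpha> c = iota n \<alpha> (b + c)"
proof
  fix x
  show "(iota n \<alpha> b \<circ> iota n \<alpha> c) x = iota n \<alpha> (b + c) x"
  proof (induction x arbitrary: b c)
    case (Cons h w)
    then show ?case
      by (cases h) (auto simp: distrib_left tr_add)
  qed simp
qed

end

subsection \<open>Contraction of the group\<close>

definition act_a_pow :: "bool \<Rightarrow> bool list \<Rightarrow> bool list" where
  "act_a_pow s = (if s then act_a else id)"

lemma act_a_pow_act_a_pow [simp]: "act_a_pow s (act_a_pow s x) = x"
  by (simp add: act_a_pow_def)

lemma tree_endo_act_a_pow: "tree_endo (act_a_pow s)"
  by (simp add: act_a_pow_def tree_endo_act_a tree_endo_id)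

lemma restr_act_a_pow: "x \<noteq> [] \<Longrightarrow> restr (act_a_pow s) x = id"
  by (simp add: act_a_pow_def restr_act_a)

text \<open>Over a finite field this is a finite set containing the nucleus of the self-similar group
  \<open>grpG n \<alpha>\<close>.\<close>
definition twisted_iotas :: "nat \<Rightarrow> 'k::field \<Rightarrow> (bool list \<Rightarrow> bool list) set" where
  "twisted_iotas n \<alpha> = {act_a_pow s \<circ> iota n \<alpha> b \<circ> act_a_pow t | s t b. True}"

context
  fixes n :: nat and \<alpha> :: "'k::field"
begin

lemma twisted_iotasI: "act_a_pow s \<circ> iota n \<alpha> b \<circ> act_a_pow t \<in> twisted_iotas n \<alpha>"
  unfolding twisted_iotas_def by blast

lemma tree_endo_twisted_iotas: "p \<in> twisted_iotas n \<alpha> \<Longrightarrow> tree_endo p"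
  unfolding twisted_iotas_def by (auto intro!: tree_endo_comp tree_endo_act_a_pow tree_endo_iota)

lemma id_mem_N0: "id \<in> N0 n \<alpha>"
proof -
  have "iota n \<alpha> 0 \<in> N0 n \<alpha>"
    by (simp add: N0_def)
  then show ?thesis
    by (simp add: iota_zero)
qed

lemma insert_act_a_N0_subset_twisted_iotas: "insert act_a (N0 n \<alpha>) \<subseteq> twisted_iotas n \<alpha>"
proof -
  have "act_a \<in> twisted_iotas n \<alpha>"
    using twisted_iotasI[where s = True and b = 0 and t = False] by (simp add: act_a_pow_def iota_zero)
  moreover have "iota n \<alpha> b \<in> twisted_iotas n \<alpha>" for b
    using twisted_iotasI[where s = False and b = b and t = False] by (simp add: act_a_pow_def)
  ultimately show ?thesis
    unfolding N0_def by blast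
qed

lemma restr_iota_letter:
  assumes "length x = 1"
  shows "restr (iota n \<alpha> b) x \<in> insert act_a (N0 n \<alpha>)"
proof -
  obtain c where "x = [c]"
    using assms by (cases x) auto
  with id_mem_N0 show ?thesis
    by (cases c) (auto simp: restr_iota_True restr_iota_False N0_def)
qed

lemma restr_twisted_iotas_letter:
  assumes "p \<in> twisted_iotas n \<alpha>" and x: "length x = 1"
  shows "restr p x \<in> insert act_a (N0 n \<alpha>)"
proof -
  obtain s t b where p: "p = act_a_pow s \<circ> (iota n \<alpha> b \<circ> act_a_pow t)"
    using assms(1) unfolding twisted_iotas_def by (auto simp: comp_assoc)
  have x': "length (act_a_pow t x) = 1"
    using x by (simp add: tree_endo_length[OF tree_endo_act_a_pow])
  then have "x \<noteq> []" and "iota n \<alpha> b (act_a_pow t x) \<noteq> []"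
    using x by (auto simp flip: length_0_conv)
  then have "restr p x = restr (iota n \<alpha> b) (act_a_pow t x)"
    unfolding p
    by (simp add: restr_comp tree_endo_comp tree_endo_act_a_pow tree_endo_iota restr_act_a_pow)
  then show ?thesis
    using restr_iota_letter[OF x'] by simp
qed

lemma restr_twisted_iotas: "p \<in> twisted_iotas n \<alpha> \<Longrightarrow> restr p x \<in> twisted_iotas n \<alpha>"
proof (induction x rule: rev_induct)
  case (snoc c x)
  then show ?case
    using restr_twisted_iotas_letter[of "restr p x" "[c]"] insert_act_a_N0_subset_twisted_iotas
    by (auto simp: restr_append)
qed simp

lemma twisted_iotas_right_inverse:
  assumes "p \<in> twisted_iotas n \<alpha>"
  shows "\<exists>p' \<in> twisted_iotas n \<alpha>. p \<circ> p' = id"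
proof -
  obtain s t b where p: "p = act_a_pow s \<circ> iota n \<alpha> b \<circ> act_a_pow t"
    using assms unfolding twisted_iotas_def by blast
  have "p \<circ> (act_a_pow t \<circ> iota n \<alpha> b \<circ> act_a_pow s) = id"
    unfolding p by (simp add: fun_eq_iff)
  then show ?thesis
    using twisted_iotasI by blast
qed

lemma restr_inv_eventually_twisted_iotas:
  assumes b: "bij g" and g: "tree_endo g"
    and K: "\<And>x. K \<le> length x \<Longrightarrow> restr g x \<in> twisted_iotas n \<alpha>"
    and x: "K \<le> length x"
  shows "restr (inv g) x \<in> twisted_iotas n \<alpha>"
proof -
  have g': "tree_endo (inv g)"
    using tree_endo_inv[OF b g] .
  define p q where "p = restr g (inv g x)" and "q = restr (inv g) x"
  have "p \<in> twisted_iotas n \<alpha>"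
    using K x by (simp add: p_def tree_endo_length[OF g'])
  then obtain p' where p': "p' \<in> twisted_iotas n \<alpha>" "p \<circ> p' = id"
    using twisted_iotas_right_inverse by blast
  have "q \<circ> p = restr (inv g \<circ> g) (inv g x)"
    by (simp add: restr_comp[OF g' g] p_def q_def surj_f_inv_f[OF bij_is_surj[OF b]])
  also have "\<dots> = id"
    using b by (simp add: bij_is_inj)
  finally have "q \<circ> p = id" .
  have "q = (q \<circ> p) \<circ> p'"
    using p'(2) by (simp add: comp_assoc)
  with \<open>q \<circ> p = id\<close> p'(1) show ?thesis
    by (simp add: q_def)
qed

end

context
  fixes n :: nat and \<alpha> :: "'k::{field,finite}"
  assumes card: "CARD('k) = 2 ^ n"
begin

lemma comp_mem_twisted_iotas:
  assumes "p \<in> insert act_a (N0 n \<alpha>)" and "q \<in> insert act_a (N0 n \<alpha>)"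
  shows "p \<circ> q \<in> twisted_iotas n \<alpha>"
proof -
  have "act_a \<circ> act_a = act_a_pow False \<circ> iota n \<alpha> 0 \<circ> act_a_pow False"
    by (simp add: act_a_pow_def iota_zero fun_eq_iff)
  moreover have "act_a \<circ> iota n \<alpha> b = act_a_pow True \<circ> iota n \<alpha> b \<circ> act_a_pow False" for b
    by (simp add: act_a_pow_def)
  moreover have "iota n \<alpha> b \<circ> act_a = act_a_pow False \<circ> iota n \<alpha> b \<circ> act_a_pow True" for b
    by (simp add: act_a_pow_def)
  moreover have "iota n \<alpha> b \<circ> iota n \<alpha> c = act_a_pow False \<circ> iota n \<alpha> (b + c) \<circ> act_a_pow False"
    for b c
    by (simp add: act_a_pow_def iota_comp_iota[OF card])
  ultimately show ?thesis
    using assms unfolding N0_def by (auto intro: twisted_iotasI)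
qed

lemma restr_comp_eventually_twisted_iotas:
  assumes g: "tree_endo g" and h: "tree_endo h"
    and Kg: "\<And>x. Kg \<le> length x \<Longrightarrow> restr g x \<in> twisted_iotas n \<alpha>"
    and Kh: "\<And>x. Kh \<le> length x \<Longrightarrow> restr h x \<in> twisted_iotas n \<alpha>"
    and x: "Suc (max Kg Kh) \<le> length x"
  shows "restr (g \<circ> h) x \<in> twisted_iotas n \<alpha>"
proof -
  obtain y c where xy: "x = y @ [c]"
    using x by (cases x rule: rev_cases) auto
  define P Q where "P = restr g (h y)" and "Q = restr h y"
  have P: "P \<in> twisted_iotas n \<alpha>" and Q: "Q \<in> twisted_iotas n \<alpha>"
    using Kg Kh x tree_endo_length[OF h, of y] by (auto simp: P_def Q_def xy)
  have "restr (g \<circ> h) x = restr (P \<circ> Q) [c]"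
    by (simp add: xy restr_append restr_comp[OF g h] P_def Q_def)
  also have "\<dots> = restr P (Q [c]) \<circ> restr Q [c]"
    by (rule restr_comp[OF tree_endo_twisted_iotas[OF P] tree_endo_twisted_iotas[OF Q]])
  also have "\<dots> \<in> twisted_iotas n \<alpha>"
  proof (rule comp_mem_twisted_iotas)
    show "restr P (Q [c]) \<in> insert act_a (N0 n \<alpha>)"
      by (rule restr_twisted_iotas_letter[OF P])
        (simp add: tree_endo_length[OF tree_endo_twisted_iotas[OF Q]])
    show "restr Q [c] \<in> insert act_a (N0 n \<alpha>)"
      by (rule restr_twisted_iotas_letter[OF Q]) simp
  qed
  finally show ?thesis .
qed

lemma grpG_restr_eventually_twisted_iotas:
  "g \<in> grpG n \<alpha> \<Longrightarrow> \<exists>K. \<forall>x. K \<le> length x \<longrightarrow> restr g x \<in> twisted_iotas n \<alpha>"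
proof (induction rule: grpG.induct)
  case gen_id
  have "id \<in> twisted_iotas n \<alpha>"
    using insert_act_a_N0_subset_twisted_iotas id_mem_N0 by blast
  then show ?case
    using restr_id unfolding id_def by auto
next
  case gen_a
  have "id \<in> twisted_iotas n \<alpha>"
    using insert_act_a_N0_subset_twisted_iotas id_mem_N0 by blast
  then have "restr act_a x \<in> twisted_iotas n \<alpha>" if "1 \<le> length x" for x
    using that restr_act_a[of x] by (cases x) auto
  then show ?case
    by blast
next
  case (gen_iota b)
  have "iota n \<alpha> b \<in> twisted_iotas n \<alpha>"
    using insert_act_a_N0_subset_twisted_iotas unfolding N0_def by blast
  then show ?case
    using restr_twisted_iotas by blast
next
  case (gen_comp g h)
  then obtain Kg Kh where
    "\<And>x. Kg \<le> length x \<Longrightarrow> restr g x \<in> twisted_iotas n \<alpha>"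
    "\<And>x. Kh \<le> length x \<Longrightarrow> restr h x \<in> twisted_iotas n \<alpha>"
    by blast
  moreover have "tree_endo g" and "tree_endo h"
    using gen_comp grpG_bij_tree_endo by blast+
  ultimately show ?case
    using restr_comp_eventually_twisted_iotas by blast
next
  case (gen_inv g)
  then obtain K where "\<And>x. K \<le> length x \<Longrightarrow> restr g x \<in> twisted_iotas n \<alpha>"
    by blast
  moreover have "bij g" and "tree_endo g"
    using gen_inv.hyps grpG_bij_tree_endo by blast+
  ultimately show ?case
    using restr_inv_eventually_twisted_iotas by blast
qed

lemma grpG_restr_eventually_act_a_or_N0:
  assumes "g \<in> grpG n \<alpha>"
  obtains K where "\<And>x. K < length x \<Longrightarrow> restr g x \<in> insert act_a (N0 n \<alpha>)"
proof -
  obtain K where K: "\<And>x. K \<le> length x \<Longrightarrow> restr g x \<in> twisted_iotas n \<alpha>"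
    using grpG_restr_eventually_twisted_iotas[OF assms] by blast
  have "restr g x \<in> insert act_a (N0 n \<alpha>)" if x: "K < length x" for x
  proof -
    obtain y c where xy: "x = y @ [c]"
      using x by (cases x rule: rev_cases) auto
    then have "restr g y \<in> twisted_iotas n \<alpha>"
      using K x by simp
    then show ?thesis
      using restr_twisted_iotas_letter[where x = "[c]"] by (simp add: xy restr_append)
  qed
  then show ?thesis
    using that by blast
qed

end

subsection \<open>Cylinders and germs\<close>

lemma length_pref [simp]: "length (pref k w) = k"
  by (simp add: pref_def)

lemma in_cyl_pref: "w \<in> cyl (pref k w)"
  by (simp add: cyl_def pref_def)

lemma cyl_append_subset: "cyl (\<nu> @ \<zeta>) \<subseteq> cyl \<nu>"
  by (auto simp: cyl_def nth_append)

lemma cyl_prefix: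
  assumes "w \<in> cyl \<nu>" and "w \<in> cyl \<nu>'" and "length \<nu> \<le> length \<nu>'"
  shows "\<nu>' = \<nu> @ drop (length \<nu>) \<nu>'"
proof -
  have "take (length \<nu>) \<nu>' = \<nu>"
    by (rule nth_equalityI) (use assms in \<open>auto simp: cyl_def\<close>)
  then show ?thesis
    by (metis append_take_drop_id)
qed

lemma cantor_open_cyl: "cantor_open (cyl \<nu>)"
  unfolding cantor_open_def
proof
  fix w
  assume "w \<in> cyl \<nu>"
  then have "cyl (pref (length \<nu>) w) \<subseteq> cyl \<nu>"
    by (auto simp: cyl_def pref_def)
  then show "\<exists>k. cyl (pref k w) \<subseteq> cyl \<nu>"
    by blast
qed

fun agree_at :: "bool list \<Rightarrow> triple \<Rightarrow> triple \<Rightarrow> bool" where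
  "agree_at \<nu> (\<eta>, g, \<mu>) (\<eta>', g', \<mu>') \<longleftrightarrow>
     (\<exists>\<epsilon> \<epsilon>'. \<nu> = \<mu> @ \<epsilon> \<and> \<nu> = \<mu>' @ \<epsilon>' \<and> \<eta> @ g \<epsilon> = \<eta>' @ g' \<epsilon>' \<and> restr g \<epsilon> = restr g' \<epsilon>')"

declare agree_at.simps [simp del]

lemma germ_rel_iff_agree_at:
  "germ_rel ((\<eta>, g, \<mu>), w) ((\<eta>', g', \<mu>'), w') \<longleftrightarrow>
     w' = w \<and> (\<exists>\<nu>. w \<in> cyl \<nu> \<and> agree_at \<nu> (\<eta>, g, \<mu>) (\<eta>', g', \<mu>'))"
  unfolding germ_rel_def by (auto simp: agree_at.simps)

lemma agree_at_sym: "agree_at \<nu> (\<eta>, g, \<mu>) (\<eta>', g', \<mu>') \<Longrightarrow> agree_at \<nu> (\<eta>', g', \<mu>') (\<eta>, g, \<mu>)"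
  by (simp only: agree_at.simps) metis

lemma agree_at_trans:
  "agree_at \<nu> (\<eta>1, g1, \<mu>1) (\<eta>2, g2, \<mu>2) \<Longrightarrow> agree_at \<nu> (\<eta>2, g2, \<mu>2) (\<eta>3, g3, \<mu>3) \<Longrightarrow>
     agree_at \<nu> (\<eta>1, g1, \<mu>1) (\<eta>3, g3, \<mu>3)"
  by (simp only: agree_at.simps) (metis same_append_eq)

lemma agree_at_append:
  assumes "tree_endo g" and "tree_endo g'" and "agree_at \<nu> (\<eta>, g, \<mu>) (\<eta>', g', \<mu>')"
  shows "agree_at (\<nu> @ \<zeta>) (\<eta>, g, \<mu>) (\<eta>', g', \<mu>')"
proof -
  obtain \<epsilon> \<epsilon>' where "\<nu> = \<mu> @ \<epsilon>" "\<nu> = \<mu>' @ \<epsilon>'" "\<eta> @ g \<epsilon> = \<eta>' @ g' \<epsilon>'" "restr g \<epsilon> = restr g' \<epsilon>'"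
    using assms(3) unfolding agree_at.simps by blast
  then show ?thesis
    by (auto simp: agree_at.simps tree_endo_append[OF assms(1)] tree_endo_append[OF assms(2)]
        restr_append intro!: exI[of _ "\<epsilon> @ \<zeta>"] exI[of _ "\<epsilon>' @ \<zeta>"])
qed

lemma agree_at_longer:
  assumes "tree_endo g" and "tree_endo g'" and "agree_at \<nu> (\<eta>, g, \<mu>) (\<eta>', g', \<mu>')"
    and "w \<in> cyl \<nu>" and "w \<in> cyl \<nu>'" and "length \<nu> \<le> length \<nu>'"
  shows "agree_at \<nu>' (\<eta>, g, \<mu>) (\<eta>', g', \<mu>')"
  using agree_at_append[OF assms(1-3), of "drop (length \<nu>) \<nu>'"] cyl_prefix[OF assms(4-6)] by simp

lemma germ_rel_trans:
  assumes "tree_endo g1" and "tree_endo g2" and "tree_endo g3"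
    and "germ_rel ((\<eta>1, g1, \<mu>1), w1) ((\<eta>2, g2, \<mu>2), w2)"
    and "germ_rel ((\<eta>2, g2, \<mu>2), w2) ((\<eta>3, g3, \<mu>3), w3)"
  shows "germ_rel ((\<eta>1, g1, \<mu>1), w1) ((\<eta>3, g3, \<mu>3), w3)"
proof -
  obtain \<nu>1 \<nu>2 where w: "w2 = w1" "w3 = w1" and "w1 \<in> cyl \<nu>1" "w1 \<in> cyl \<nu>2"
    and a12: "agree_at \<nu>1 (\<eta>1, g1, \<mu>1) (\<eta>2, g2, \<mu>2)"
    and a23: "agree_at \<nu>2 (\<eta>2, g2, \<mu>2) (\<eta>3, g3, \<mu>3)"
    using assms(4,5) unfolding germ_rel_iff_agree_at by blast
  define \<nu> where "\<nu> = pref (max (length \<nu>1) (length \<nu>2)) w1"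
  have "w1 \<in> cyl \<nu>"
    by (simp add: \<nu>_def in_cyl_pref)
  have "agree_at \<nu> (\<eta>1, g1, \<mu>1) (\<eta>2, g2, \<mu>2)"
    by (rule agree_at_longer[OF assms(1,2) a12 \<open>w1 \<in> cyl \<nu>1\<close> \<open>w1 \<in> cyl \<nu>\<close>]) (simp add: \<nu>_def)
  moreover have "agree_at \<nu> (\<eta>2, g2, \<mu>2) (\<eta>3, g3, \<mu>3)"
    by (rule agree_at_longer[OF assms(2,3) a23 \<open>w1 \<in> cyl \<nu>2\<close> \<open>w1 \<in> cyl \<nu>\<close>]) (simp add: \<nu>_def)
  ultimately show ?thesis
    unfolding germ_rel_iff_agree_at using w \<open>w1 \<in> cyl \<nu>\<close> agree_at_trans by blast
qed

lemma mem_germ_self: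
  assumes "g \<in> grpG n \<alpha>" and "w \<in> cyl \<mu>"
  shows "((\<eta>, g, \<mu>), w) \<in> germ n \<alpha> ((\<eta>, g, \<mu>), w)"
proof -
  have "germ_rel ((\<eta>, g, \<mu>), w) ((\<eta>, g, \<mu>), w)"
    unfolding germ_rel_iff_agree_at agree_at.simps
    using assms(2) by (intro conjI exI[of _ "\<mu>"] exI[of _ "[]"]) auto
  with assms show ?thesis
    by (simp add: germ_def valid_rep_def)
qed

lemma germ_eqI:
  assumes g1: "g1 \<in> grpG n \<alpha>" and g2: "g2 \<in> grpG n \<alpha>"
    and rel: "germ_rel ((\<eta>1, g1, \<mu>1), w1) ((\<eta>2, g2, \<mu>2), w2)"
  shows "germ n \<alpha> ((\<eta>1, g1, \<mu>1), w1) = germ n \<alpha> ((\<eta>2, g2, \<mu>2), w2)"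
proof -
  have t1: "tree_endo g1" and t2: "tree_endo g2"
    using g1 g2 grpG_bij_tree_endo by blast+
  have rel': "germ_rel ((\<eta>2, g2, \<mu>2), w2) ((\<eta>1, g1, \<mu>1), w1)"
    using rel unfolding germ_rel_iff_agree_at by (auto dest: agree_at_sym)
  have "germ_rel ((\<eta>1, g1, \<mu>1), w1) r \<longleftrightarrow> germ_rel ((\<eta>2, g2, \<mu>2), w2) r"
    if "valid_rep n \<alpha> r" for r
  proof -
    obtain \<eta>3 g3 \<mu>3 w3 where r: "r = ((\<eta>3, g3, \<mu>3), w3)"
      by (metis prod.exhaust)
    have "tree_endo g3"
      using that grpG_bij_tree_endo by (auto simp: r valid_rep_def)
    then show ?thesis
      unfolding r using germ_rel_trans[OF t1 t2 _ rel] germ_rel_trans[OF t2 t1 _ rel'] by blast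
  qed
  then show ?thesis
    unfolding germ_def by blast
qed

lemma germ_eq_on_cyl:
  assumes "g \<in> grpG n \<alpha>" and "g' \<in> grpG n \<alpha>"
    and "agree_at \<nu> (\<eta>, g, \<mu>) (\<eta>', g', \<mu>')" and "v \<in> cyl \<nu>"
  shows "germ n \<alpha> ((\<eta>, g, \<mu>), v) = germ n \<alpha> ((\<eta>', g', \<mu>'), v)"
  using assms by (intro germ_eqI) (auto simp: germ_rel_iff_agree_at)

lemma mem_germ_imp_same_point: "((\<eta>', g', \<mu>'), w') \<in> germ n \<alpha> ((\<eta>, g, \<mu>), w) \<Longrightarrow> w' = w"
  by (simp add: germ_def germ_rel_iff_agree_at)

lemma openin_Um:
  assumes "h \<in> grpG n \<alpha>"
  shows "openin (germ_top n \<alpha>) (Um n \<alpha> m h)"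
proof -
  have "cyl (replicate m True) \<subseteq> cyl []"
    by (simp add: cyl_def)
  then have "Um n \<alpha> m h \<in> germ_basis n \<alpha>"
    unfolding germ_basis_def Um_def using assms cantor_open_cyl by blast
  then show ?thesis
    unfolding germ_top_def openin_topology_generated_by_iff by (rule generate_topology_on.Basis)
qed

subsection \<open>The bisection near \<open>z\<^sub>e\<close>\<close>

lemma primitive_poly_root_nonzero:
  fixes \<alpha> :: "'k::field"
  assumes n: "n \<ge> 2" and f: "primitive_poly n f" and root: "poly (map_poly of_bit f) \<alpha> = 0"
  shows "\<alpha> \<noteq> 0"
proof
  assume "\<alpha> = 0"
  then have "of_bit (coeff f 0) = (0::'k)"
    using root by (simp add: poly_0_coeff_0 coeff_map_poly)
  then have "coeff f 0 = 0"
    by (cases "coeff f 0") auto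
  then have "[:0, 1:] dvd f"
    by (simp add: dvd_iff_poly_eq_0 poly_0_coeff_0)
  then obtain q where fq: "f = [:0, 1:] * q"
    by (elim dvdE)
  have irr: "irreducible f" and deg: "degree f = n"
    using f by (auto simp: primitive_poly_def)
  then have "q \<noteq> 0"
    using fq by auto
  have "\<not> is_unit [:0, 1::bit:]"
    by (subst is_unit_iff_degree) auto
  then have "is_unit q"
    using irreducibleD[OF irr fq] by blast
  then have "degree f = 1"
    using fq \<open>q \<noteq> 0\<close> by (simp add: degree_mult_eq is_unit_iff_degree)
  then show False
    using deg n by simp
qed

text \<open>The restriction at \<open>1\<^sup>j\<close> fixes \<open>\<delta>\<close> with trivial restriction there, which rules out \<open>a\<close>:
  it moves every nonempty word and is not the identity.\<close>
lemma restr_replicate_True_in_N0: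
  assumes g: "tree_endo g"
    and restr_in: "restr g (replicate j True) \<in> insert act_a (N0 n \<alpha>)"
    and fixed: "\<gamma> @ g (replicate j True @ \<delta>) = replicate a True @ replicate j True @ \<delta>"
    and restr_fix: "restr g (replicate j True @ \<delta>) = id"
  shows "\<gamma> @ g (replicate j True) = replicate (a + j) True \<and> restr g (replicate j True) \<in> N0 n \<alpha>"
proof -
  define P where "P = restr g (replicate j True)"
  have "(\<gamma> @ g (replicate j True)) @ P \<delta> = replicate (a + j) True @ \<delta>"
    using fixed by (simp add: P_def tree_endo_append[OF g] replicate_add)
  moreover have "length (\<gamma> @ g (replicate j True)) = a + j"
    using arg_cong[OF fixed, of length] by (simp add: tree_endo_length[OF g])
  ultimately have ones: "\<gamma> @ g (replicate j True) = replicate (a + j) True" and "P \<delta> = \<delta>"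
    by (metis append_eq_append_conv length_replicate)+
  have "restr P \<delta> = id"
    using restr_fix by (simp add: P_def restr_append)
  have "P \<noteq> act_a"
  proof
    assume "P = act_a"
    then show False
      using \<open>P \<delta> = \<delta>\<close> \<open>restr P \<delta> = id\<close> act_a_ne_id by (cases \<delta>) auto
  qed
  with restr_in ones show ?thesis
    by (simp add: P_def)
qed

lemma common_germ_with_identity_near_ones:
  assumes "germ n \<alpha> (([], iota n \<alpha> 0, []), ones) \<in> germ_top n \<alpha> closure_of Theta n \<alpha> (\<gamma>, g, \<mu>) U"
    and g: "g \<in> grpG n \<alpha>" and U: "U \<subseteq> cyl \<mu>"
  obtains w where "w \<in> cyl (replicate m True)" "w \<in> U" "germ_rel (([], id, []), w) ((\<gamma>, g, \<mu>), w)"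
proof -
  have "germ n \<alpha> (([], iota n \<alpha> 0, []), ones) \<in> Um n \<alpha> m (iota n \<alpha> 0)"
    unfolding Um_def Theta_def by (rule imageI) (simp add: cyl_def ones_def)
  then obtain y where "y \<in> Theta n \<alpha> (\<gamma>, g, \<mu>) U" "y \<in> Um n \<alpha> m (iota n \<alpha> 0)"
    using assms(1) openin_Um[OF grpG.gen_iota] unfolding in_closure_of by blast
  then obtain w1 w2 where w1: "w1 \<in> U" "y = germ n \<alpha> ((\<gamma>, g, \<mu>), w1)"
    and w2: "w2 \<in> cyl (replicate m True)" "y = germ n \<alpha> (([], id, []), w2)"
    by (auto simp: Theta_def Um_def iota_zero)
  have "((\<gamma>, g, \<mu>), w1) \<in> germ n \<alpha> (([], id, []), w2)"
    using mem_germ_self[OF g] w1 w2 U by blast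
  then have "germ_rel (([], id, []), w2) ((\<gamma>, g, \<mu>), w1)" and "w1 = w2"
    by (auto simp: germ_def mem_germ_imp_same_point)
  with w1 w2 that show ?thesis
    by blast
qed

lemma agree_at_replicate_True_iota:
  assumes "\<alpha> \<noteq> 0"
    and "\<gamma> @ g (replicate j True) = replicate (a + j) True"
    and "restr g (replicate j True) = iota n \<alpha> b"
  shows "agree_at (replicate (a + j) True) (\<gamma>, g, replicate a True) ([], iota n \<alpha> (b / \<alpha> ^ (a + j)), [])"
  unfolding agree_at.simps using assms
  by (intro exI[of _ "replicate j True"] exI[of _ "replicate (a + j) True"])
    (simp add: replicate_add[symmetric] iota_replicate_True restr_iota_replicate_True)

lemma germs_agree_on_ones:
  assumes \<alpha>: "\<alpha> \<noteq> 0" and g: "g \<in> grpG n \<alpha>"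
    and K: "\<And>x. K < length x \<Longrightarrow> restr g x \<in> insert act_a (N0 n \<alpha>)"
    and m: "K + length (\<mu> @ \<eta>) < m"
    and w: "w \<in> cyl (replicate m True)" "w \<in> cyl (\<mu> @ \<eta>)"
    and rel: "germ_rel (([], id, []), w) ((\<gamma>, g, \<mu>), w)"
  shows "cyl (replicate m True) \<subseteq> cyl (\<mu> @ \<eta>)"
    and "\<exists>gD \<in> N0 n \<alpha>. \<forall>v \<in> cyl (replicate m True). germ n \<alpha> ((\<gamma>, g, \<mu>), v) = germ n \<alpha> (([], gD, []), v)"
proof -
  have tg: "tree_endo g"
    using g grpG_bij_tree_endo by blast
  define a j where "a = length \<mu>" and "j = m - length \<mu>"
  have m_eq: "m = a + j" and "K < j"
    using m by (simp_all add: a_def j_def)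
  have "replicate m True = (\<mu> @ \<eta>) @ drop (length (\<mu> @ \<eta>)) (replicate m True)"
    using cyl_prefix[OF w(2,1)] m by simp
  then show "cyl (replicate m True) \<subseteq> cyl (\<mu> @ \<eta>)"
    by (metis cyl_append_subset)
  have \<mu>: "\<mu> = replicate a True"
    using arg_cong[OF \<open>replicate m True = _\<close>, of "take a"] m by (simp add: a_def)
  obtain \<nu> where "w \<in> cyl \<nu>" and "agree_at \<nu> ([], id, []) (\<gamma>, g, \<mu>)"
    using rel unfolding germ_rel_iff_agree_at by blast
  then have agree: "agree_at (pref (max (length \<nu>) m) w) ([], id, []) (\<gamma>, g, \<mu>)"
    using agree_at_longer[OF tree_endo_id tg] in_cyl_pref by fastforce
  define \<delta> where "\<delta> = drop m (pref (max (length \<nu>) m) w)"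
  have "pref (max (length \<nu>) m) w = replicate m True @ \<delta>"
    using cyl_prefix[OF w(1) in_cyl_pref] by (simp add: \<delta>_def)
  then have "\<gamma> @ g (replicate j True @ \<delta>) = replicate a True @ replicate j True @ \<delta>"
    and "restr g (replicate j True @ \<delta>) = id"
    using agree by (auto simp: agree_at.simps \<mu> m_eq replicate_add)
  then have ones: "\<gamma> @ g (replicate j True) = replicate (a + j) True"
    and "restr g (replicate j True) \<in> N0 n \<alpha>"
    using restr_replicate_True_in_N0[OF tg K] \<open>K < j\<close> by auto
  then obtain b where b: "restr g (replicate j True) = iota n \<alpha> b"
    by (auto simp: N0_def)
  define gD where "gD = iota n \<alpha> (b / \<alpha> ^ m)"
  have "agree_at (replicate m True) (\<gamma>, g, \<mu>) ([], gD, [])"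
    using agree_at_replicate_True_iota[OF \<alpha> ones b] by (simp add: \<mu> m_eq gD_def)
  moreover have "gD \<in> N0 n \<alpha>" and "gD \<in> grpG n \<alpha>"
    by (simp_all add: gD_def N0_def grpG.gen_iota)
  ultimately show "\<exists>gD \<in> N0 n \<alpha>. \<forall>v \<in> cyl (replicate m True). germ n \<alpha> ((\<gamma>, g, \<mu>), v) = germ n \<alpha> (([], gD, []), v)"
    using germ_eq_on_cyl[OF g] by blast
qed

lemma Theta_inter_Um_eq_Um:
  assumes D: "D = Theta n \<alpha> (\<gamma>, g, \<mu>) U" and g: "g \<in> grpG n \<alpha>" and U: "U \<subseteq> cyl \<mu>"
    and sub: "cyl (replicate m True) \<subseteq> U" and gD: "gD \<in> N0 n \<alpha>"
    and eq: "\<forall>v \<in> cyl (replicate m True). germ n \<alpha> ((\<gamma>, g, \<mu>), v) = germ n \<alpha> (([], gD, []), v)"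
  shows "D \<inter> (\<Union>h \<in> N0 n \<alpha>. Um n \<alpha> m h) = Um n \<alpha> m gD"
proof (intro set_eqI iffI)
  fix x
  assume "x \<in> D \<inter> (\<Union>h \<in> N0 n \<alpha>. Um n \<alpha> m h)"
  then obtain v v' h where v: "v \<in> cyl (replicate m True)" "x = germ n \<alpha> (([], h, []), v)"
    and v': "v' \<in> U" "x = germ n \<alpha> ((\<gamma>, g, \<mu>), v')"
    by (auto simp: D Theta_def Um_def)
  have "v' = v"
    using mem_germ_self[OF g] v v' U mem_germ_imp_same_point by blast
  then show "x \<in> Um n \<alpha> m gD"
    using eq v v' by (auto simp: Um_def Theta_def)
next
  fix x
  assume "x \<in> Um n \<alpha> m gD"
  then obtain v where "v \<in> cyl (replicate m True)" "x = germ n \<alpha> (([], gD, []), v)"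
    by (auto simp: Um_def Theta_def)
  then show "x \<in> D \<inter> (\<Union>h \<in> N0 n \<alpha>. Um n \<alpha> m h)"
    using eq sub gD by (auto simp: D Theta_def Um_def)
qed

theorem mainTheorem8:
  fixes n :: nat and f :: "bit poly" and \<alpha> :: "'k::{field,finite}"
    and \<gamma> \<mu> \<eta> :: "bool list" and g :: "bool list \<Rightarrow> bool list"
    and D :: "rep set set"
  assumes "n \<ge> 2"
    and "CARD('k) = 2 ^ n"
    and "primitive_poly n f"
    and "poly (map_poly of_bit f) \<alpha> = 0"
    and "g \<in> grpG n \<alpha>"
    and "D = Theta n \<alpha> (\<gamma>, g, \<mu>) (cyl (\<mu> @ \<eta>))"
    and "compact_open_bisection n \<alpha> D"
    and "germ n \<alpha> (([], iota n \<alpha> 0, []), ones) \<in> germ_top n \<alpha> closure_of D"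
  shows "\<exists>m::nat. \<exists>gD \<in> N0 n \<alpha>.
           D \<inter> (\<Union>h \<in> N0 n \<alpha>. Um n \<alpha> m h) = Um n \<alpha> m gD"
proof -
  have \<alpha>: "\<alpha> \<noteq> 0"
    using primitive_poly_root_nonzero assms(1,3,4) by blast
  obtain K where K: "\<And>x. K < length x \<Longrightarrow> restr g x \<in> insert act_a (N0 n \<alpha>)"
    using grpG_restr_eventually_act_a_or_N0[OF assms(2,5)] by blast
  define m where "m = K + length (\<mu> @ \<eta>) + 1"
  have U: "cyl (\<mu> @ \<eta>) \<subseteq> cyl \<mu>"
    by (rule cyl_append_subset)
  obtain w where w: "w \<in> cyl (replicate m True)" "w \<in> cyl (\<mu> @ \<eta>)"
    and rel: "germ_rel (([], id, []), w) ((\<gamma>, g, \<mu>), w)"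
    using common_germ_with_identity_near_ones[OF assms(8)[unfolded assms(6)] assms(5) U] by blast
  have "K + length (\<mu> @ \<eta>) < m"
    by (simp add: m_def)
  note agree = germs_agree_on_ones[OF \<alpha> assms(5) K this w rel]
  then obtain gD where "gD \<in> N0 n \<alpha>"
    and "\<forall>v \<in> cyl (replicate m True). germ n \<alpha> ((\<gamma>, g, \<mu>), v) = germ n \<alpha> (([], gD, []), v)"
    by blast
  then show ?thesis
    using Theta_inter_Um_eq_Um[OF assms(6,5) U agree(1)] by blast
qed

end
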